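(* Let $d,\mathfrak d,N\in\mathbb N$, $L\in\mathbb R$, $u\in[-\infty,\infty)$, $v\in(u,\infty]$ satisfy $\mathfrak d\ge 2d^2(N+1)^d+5d(N+1)^{2d}+\frac43(N+1)^{3d}$, let $\|\cdot\|$ be the Euclidean norm on $\mathbb R^d$, let $p=(p_1,\dots,p_d),q=(q_1,\dots,q_d)\in\mathbb R^d$ satisfy $p_i\le q_i$ for all $i$ and $\max_j(q_j-p_j)>0$, let $D=\prod_{i=1}^d[p_i,q_i]$, let $\mathcal M=\{y\in\mathbb R^d\colon\exists k_1,\dots,k_d\in\{0,1,\dots,N\}\ \forall i\colon y_i=p_i+\frac{k_i}N(q_i-p_i)\}$, and let $f\colon D\to[u,v]\cap\mathbb R$ satisfy $|f(x)-f(y)|\le L\|x-y\|$ for all $x,y\in D$. Then there exist $\theta\in\mathbb R^{\mathfrak d}$, $\mathfrak L\in\mathbb N$ and $l=(l_0,\dots,l_{\mathfrak L})\in\mathbb N^{\mathfrak L+1}$ with $l_0=d$ and $l_{\mathfrak L}=1$ such that $\|\theta\|_\infty\le\max\{1,L,\|p\|_\infty,\|q\|_\infty,2\sup_{z\in D}|f(z)|\}$, $\sum_{k=1}^{\mathfrak L}l_k(l_{k-1}+1)\le\mathfrak d$, and $$\sup_{x\in D}|f(x)-\mathscr N^{\theta,l}_{u,v}(x)|\le\frac LN\sum_{i=1}^d|q_i-p_i|.$$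
   Context: $\|\cdot\|_\infty$ is the maximum norm. For $r,s\in\mathbb N$, $k\in\mathbb N_0$, $\theta\in\mathbb R^{\mathfrak d}$ with $\mathfrak d\ge k+rs+r$, $\mathcal A^{\theta,k}_{r,s}\colon\mathbb R^s\to\mathbb R^r$ has $i$-th component $x\mapsto\sum_{j=1}^s\theta_{k+(i-1)s+j}x_j+\theta_{k+rs+i}$. $\mathfrak C_{u,v,n}$ applies $y\mapsto\max\{u,\min\{y,v\}\}$ componentwise on $\mathbb R^n$ and $\mathfrak R_n$ applies $y\mapsto\max\{y,0\}$ componentwise. For $l=(l_0,\dots,l_{\mathfrak L})$ with $\mathfrak d\ge\sum_kl_k(l_{k-1}+1)$ and $s_k=\sum_{j=1}^kl_j(l_{j-1}+1)$, $\mathscr N^{\theta,l}_{u,v}=\mathfrak C_{u,v,l_{\mathfrak L}}\circ\mathcal A^{\theta,s_{\mathfrak L-1}}_{l_{\mathfrak L},l_{\mathfrak L-1}}\circ\mathfrak R_{l_{\mathfrak L-1}}\circ\cdots\circ\mathfrak R_{l_1}\circ\mathcal A^{\theta,0}_{l_1,l_0}\colon\mathbb R^{l_0}\to\mathbb R^{l_{\mathfrak L}}$ (for $\mathfrak L=1$ just $\mathfrak C_{u,v,l_1}\circ\mathcal A^{\theta,0}_{l_1,l_0}$). *)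

theory Defs
  imports "HOL-Analysis.Analysis"
begin

text \<open>Vectors of R^n are represented as real lists of length n (0-based list
indices; component i of the paper is list entry i-1). Parameter vectors
theta in R^dd are real lists of length dd.\<close>

definition maxnorm :: "real list \<Rightarrow> real" where
  "maxnorm xs = Max (insert 0 (abs ` set xs))"

definition eucl_dist :: "real list \<Rightarrow> real list \<Rightarrow> real" where
  "eucl_dist x y = sqrt (\<Sum>i<length x. (x ! i - y ! i)^2)"

text \<open>Affine map A^{theta,k}_{r,s}: component i (1-based) is
  sum_{j=1..s} theta_{k+(i-1)s+j} x_j + theta_{k+rs+i}; in 0-based list terms below.\<close>
definition affine :: "real list \<Rightarrow> nat \<Rightarrow> nat \<Rightarrow> nat \<Rightarrow> real list \<Rightarrow> real list" where
  "affine \<theta> k r s x =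
     map (\<lambda>i. (\<Sum>j<s. \<theta> ! (k + i * s + j) * x ! j) + \<theta> ! (k + r * s + i)) [0..<r]"

definition relu :: "real list \<Rightarrow> real list" where
  "relu x = map (\<lambda>y. max y 0) x"

definition clip :: "ereal \<Rightarrow> ereal \<Rightarrow> real list \<Rightarrow> real list" where
  "clip u v x = map (\<lambda>y. real_of_ereal (max u (min (ereal y) v))) x"

definition offs :: "nat list \<Rightarrow> nat \<Rightarrow> nat" where
  "offs l k = (\<Sum>j\<in>{1..k}. l ! j * (l ! (j - 1) + 1))"

fun hidden :: "real list \<Rightarrow> nat list \<Rightarrow> nat \<Rightarrow> real list \<Rightarrow> real list" where
  "hidden \<theta> l 0 x = x"
| "hidden \<theta> l (Suc k) x =
     relu (affine \<theta> (offs l k) (l ! Suc k) (l ! k) (hidden \<theta> l k x))"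

definition realization :: "real list \<Rightarrow> nat list \<Rightarrow> ereal \<Rightarrow> ereal \<Rightarrow> real list \<Rightarrow> real list" where
  "realization \<theta> l u v x =
     (let L = length l - 1 in
      clip u v (affine \<theta> (offs l (L - 1)) (l ! L) (l ! (L - 1)) (hidden \<theta> l (L - 1) x)))"

end

(* The network evaluates, up to the final clipping, the McShane-type lower envelope
     x \<mapsto> max_j (f(y_j) - L |x - y_j|_1)
   over the K = (N+1)^d grid points y_j of the box. Every cone lies below f because f is
   L-Lipschitz and the l1 norm dominates the Euclidean one; the cone at the grid point nearest
   to x, which is at l1 distance at most sum_i (q_i - p_i) / (2N), is within twice that times L
   of f(x). The first hidden layer produces the positive and negative parts of all x_i - y_{j,i}
   (so each l1 distance is a sum of ReLUs), the second forms the cones, and every further layer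
   merges one more cone into a running maximum using max m c = relu m - relu (-m) + relu (c - m),
   while carrying the cones still to be merged along as pairs relu c, relu (-c). Clipping to
   [u, v] can only move the output towards f(x). The layer widths d, 2dK, 2K-1, 2K-3, ..., 3, 1
   give the bound on the number of parameters. *)

theory Submission
  imports Defs
begin

section \<open>Parameter layout of layered networks\<close>

definition layer_block :: "(nat \<Rightarrow> nat \<Rightarrow> real) \<Rightarrow> (nat \<Rightarrow> real) \<Rightarrow> nat \<Rightarrow> nat \<Rightarrow> real list" where
  "layer_block W b r s = concat (map (\<lambda>i. map (W i) [0..<s]) [0..<r]) @ map b [0..<r]"

definition net_params ::
  "(nat \<Rightarrow> nat \<Rightarrow> nat \<Rightarrow> real) \<Rightarrow> (nat \<Rightarrow> nat \<Rightarrow> real) \<Rightarrow> nat list \<Rightarrow> nat \<Rightarrow> real list" where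
  "net_params W b l n = concat (map (\<lambda>k. layer_block (W k) (b k) (l ! Suc k) (l ! k)) [0..<n])"

lemma row_major_index_less:
  assumes "i < r" and "j < (s::nat)"
  shows "i * s + j < r * s"
proof -
  have "i * s + j < Suc i * s" using assms by simp
  also have "\<dots> \<le> r * s" using assms by (intro mult_le_mono1) simp
  finally show ?thesis .
qed

lemma length_concat_map_upt_const:
  assumes "\<And>i. i < r \<Longrightarrow> length (g i) = s"
  shows "length (concat (map g [0..<r])) = r * s"
  using assms by (induction r) auto

lemma nth_concat_map_upt_const:
  assumes "\<And>i. i < r \<Longrightarrow> length (g i) = s" and "i < r" and "j < s"
  shows "concat (map g [0..<r]) ! (i * s + j) = g i ! j"
  using assms
proof (induction r)
  case 0
  then show ?case by simp
next
  case (Suc r)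
  have len: "length (concat (map g [0..<r])) = r * s"
    using Suc.prems(1) by (intro length_concat_map_upt_const) auto
  show ?case
  proof (cases "i < r")
    case True
    then have "i * s + j < r * s"
      using \<open>j < s\<close> by (rule row_major_index_less)
    then show ?thesis using Suc True len by (simp add: nth_append)
  next
    case False
    then have "i = r" using Suc.prems(2) by simp
    then show ?thesis using len Suc.prems by (simp add: nth_append)
  qed
qed

lemma length_layer_block: "length (layer_block W b r s) = r * s + r"
  by (simp add: layer_block_def length_concat_map_upt_const)

lemma nth_layer_block_weight:
  assumes "i < r" and "j < s"
  shows "layer_block W b r s ! (i * s + j) = W i j"
proof -
  have "i * s + j < r * s"
    using assms by (rule row_major_index_less)
  then show ?thesis
    using assms by (simp add: layer_block_def nth_append length_concat_map_upt_const
        nth_concat_map_upt_const[where s = s])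
qed

lemma nth_layer_block_bias: "i < r \<Longrightarrow> layer_block W b r s ! (r * s + i) = b i"
  by (simp add: layer_block_def nth_append length_concat_map_upt_const)

lemma affine_layer_block:
  assumes "\<And>t. t < r * s + r \<Longrightarrow> \<theta> ! (k + t) = layer_block W b r s ! t"
  shows "affine \<theta> k r s x = map (\<lambda>i. (\<Sum>j<s. W i j * x ! j) + b i) [0..<r]"
  unfolding affine_def
proof (rule map_cong[OF refl])
  fix i assume "i \<in> set [0..<r]"
  then have i: "i < r" by simp
  have "\<theta> ! (k + i * s + j) = W i j" if j: "j < s" for j
  proof -
    have "i * s + j < r * s"
      using i j by (rule row_major_index_less)
    then show ?thesis
      using assms[of "i * s + j"] nth_layer_block_weight[OF i j] by (simp add: add.assoc)
  qed
  moreover have "\<theta> ! (k + r * s + i) = b i"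
    using assms[of "r * s + i"] nth_layer_block_bias[OF i] i by (simp add: add.assoc)
  ultimately show "(\<Sum>j<s. \<theta> ! (k + i * s + j) * x ! j) + \<theta> ! (k + r * s + i)
      = (\<Sum>j<s. W i j * x ! j) + b i"
    by simp
qed

lemma length_net_params: "length (net_params W b l n) = offs l n"
  by (induction n) (simp_all add: net_params_def offs_def length_layer_block algebra_simps)

lemma nth_net_params:
  assumes "k < n" and "t < l ! Suc k * l ! k + l ! Suc k"
  shows "(net_params W b l n @ zs) ! (offs l k + t) = layer_block (W k) (b k) (l ! Suc k) (l ! k) ! t"
proof -
  have "[0..<n] = [0..<k] @ k # [Suc k..<n]"
    using assms(1) by (metis le0 le_add_diff_inverse less_imp_le_nat upt_add_eq_append upt_conv_Cons)
  define rest where "rest = concat (map (\<lambda>k. layer_block (W k) (b k) (l ! Suc k) (l ! k)) [Suc k..<n])"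
  have "net_params W b l n = net_params W b l k @ layer_block (W k) (b k) (l ! Suc k) (l ! k) @ rest"
    by (simp add: net_params_def rest_def \<open>[0..<n] = _\<close>)
  then have "(net_params W b l n @ zs) ! (offs l k + t)
      = (layer_block (W k) (b k) (l ! Suc k) (l ! k) @ rest @ zs) ! t"
    by (metis append.assoc length_net_params nth_append_length_plus)
  also have "\<dots> = layer_block (W k) (b k) (l ! Suc k) (l ! k) ! t"
    using assms(2) by (simp add: nth_append length_layer_block)
  finally show ?thesis .
qed

lemma affine_net_params:
  assumes "k < n"
  shows "affine (net_params W b l n @ zs) (offs l k) (l ! Suc k) (l ! k) x
    = map (\<lambda>i. (\<Sum>j<l ! k. W k i j * x ! j) + b k i) [0..<l ! Suc k]"
  using assms by (intro affine_layer_block nth_net_params)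

lemma set_layer_block: "set (layer_block W b r s) \<subseteq> {W i j | i j. True} \<union> range b"
  by (auto simp: layer_block_def)

lemma set_net_params: "set (net_params W b l n) \<subseteq> {W k i j | k i j. True} \<union> {b k i | k i. True}"
proof
  fix t assume "t \<in> set (net_params W b l n)"
  then obtain k where "t \<in> set (layer_block (W k) (b k) (l ! Suc k) (l ! k))"
    by (auto simp: net_params_def)
  then show "t \<in> {W k i j | k i j. True} \<union> {b k i | k i. True}"
    using set_layer_block by blast
qed

lemma eucl_dist_le_sum_abs: "length x = n \<Longrightarrow> eucl_dist x y \<le> (\<Sum>i<n. \<bar>x ! i - y ! i\<bar>)"
  using L2_set_le_sum_abs[of "\<lambda>i. x ! i - y ! i" "{..<n}"] by (simp add: eucl_dist_def L2_set_def)

lemma eucl_dist_pos: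
  assumes "length x = n" and "i < n" and "x ! i \<noteq> y ! i"
  shows "0 < eucl_dist x y"
proof -
  have "0 < (x ! i - y ! i)\<^sup>2" using assms(3) by simp
  also have "\<dots> \<le> (\<Sum>i<n. (x ! i - y ! i)\<^sup>2)"
    using assms(2) by (intro member_le_sum) auto
  finally show ?thesis using assms(1) by (simp add: eucl_dist_def)
qed

lemma dist_clip_le:
  assumes "u \<le> ereal z" and "ereal z \<le> v"
  shows "\<bar>z - hd (clip u v [g])\<bar> \<le> \<bar>z - g\<bar>"
proof (cases "ereal g \<le> u")
  case True
  then obtain a where "u = ereal a" using assms(1) by (cases u) auto
  moreover have "max u (min (ereal g) v) = u"
    using True by (simp add: min.coboundedI1)
  ultimately show ?thesis using True assms(1) by (simp add: clip_def)
next
  case not_below: False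
  show ?thesis
  proof (cases "v \<le> ereal g")
    case True
    then obtain b where "v = ereal b" using assms(2) by (cases v) auto
    moreover have "max u (min (ereal g) v) = v"
      using True order_trans[OF assms] by (simp add: min_def max_def)
    ultimately show ?thesis using True assms(2) by (simp add: clip_def)
  next
    case False
    then have "max u (min (ereal g) v) = ereal g" using not_below by (auto simp: min_def max_def not_le)
    then show ?thesis by (simp add: clip_def)
  qed
qed

lemma maxnorm_le: "0 \<le> B \<Longrightarrow> (\<And>t. t \<in> set xs \<Longrightarrow> \<bar>t\<bar> \<le> B) \<Longrightarrow> maxnorm xs \<le> B"
  by (auto simp: maxnorm_def intro: Max.boundedI)

lemma abs_nth_le_maxnorm: "i < length xs \<Longrightarrow> \<bar>xs ! i\<bar> \<le> maxnorm xs"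
  unfolding maxnorm_def by (intro Max_ge) auto

lemma sum_lessThan_truncate:
  assumes "m \<le> n" and "\<And>c. m \<le> c \<Longrightarrow> g c = 0"
  shows "(\<Sum>c<n. g c) = (\<Sum>c<(m::nat). g c)"
  by (rule sum.mono_neutral_right) (use assms in auto)

lemma max_eq_relu_combination: "max m 0 - max (- m) 0 + max (b - m) 0 = max m (b::real)"
  by (auto simp: max_def)

lemma nearest_grid_point:
  fixes a b x :: real and N :: nat
  assumes "a \<le> x" and "x \<le> b" and "N \<ge> 1"
  shows "\<exists>k\<le>N. \<bar>x - (a + real k / real N * (b - a))\<bar> \<le> (b - a) / (2 * real N)"
proof (cases "a = b")
  case True
  then show ?thesis using assms by (intro exI[of _ 0]) auto
next
  case False
  then have ba: "b - a > 0" using assms by simp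
  have N0: "real N > 0" using assms(3) by simp
  define t where "t = real N * (x - a) / (b - a)"
  have "0 \<le> t" using assms ba by (simp add: t_def)
  have "t \<le> real N"
    using assms ba N0 by (simp add: t_def divide_le_eq mult_left_mono)
  define k where "k = nat \<lfloor>t + 1/2\<rfloor>"
  have k: "real k = of_int \<lfloor>t + 1/2\<rfloor>" using \<open>0 \<le> t\<close> by (simp add: k_def)
  then have "\<bar>t - real k\<bar> \<le> 1/2" by linarith
  have "k \<le> N" using k \<open>t \<le> real N\<close> by linarith
  have "x - (a + real k / real N * (b - a)) = (t - real k) * (b - a) / real N"
    using ba N0 by (simp add: t_def field_simps)
  also have "\<bar>\<dots>\<bar> = \<bar>t - real k\<bar> * (b - a) / real N"
    using ba N0 by (simp add: abs_mult)
  also have "\<dots> \<le> 1/2 * (b - a) / real N"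
    using \<open>\<bar>t - real k\<bar> \<le> 1/2\<close> ba N0 by (intro divide_right_mono mult_right_mono) auto
  finally show ?thesis using \<open>k \<le> N\<close> by auto
qed

lemma sum_products_le_cubic:
  "3 * (\<Sum>k\<in>{3..n}. (2 * real k - 3) * (2 * real k)) \<le> 4 * real n ^ 3 - 3 * real n ^ 2 - real n"
proof (induction n)
  case 0
  then show ?case by simp
next
  case (Suc n)
  show ?case
  proof (cases "n < 2")
    case True
    then have "n = 0 \<or> n = 1" by auto
    then show ?thesis by auto
  next
    case False
    then have "(\<Sum>k\<in>{3..Suc n}. (2 * real k - 3) * (2 * real k))
        = (\<Sum>k\<in>{3..n}. (2 * real k - 3) * (2 * real k)) + (2 * real (Suc n) - 3) * (2 * real (Suc n))"
      by simp
    then show ?thesis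
      using Suc.IH by (simp add: algebra_simps power2_eq_square power3_eq_cube)
  qed
qed

section \<open>A ReLU network computing the maximum of cones over a grid\<close>

locale grid_net =
  fixes d N :: nat and L :: real and p q :: "real list" and f :: "real list \<Rightarrow> real"
  assumes d_pos: "d \<ge> 1" and N_pos: "N \<ge> 1"
begin

definition K :: nat where "K = (N + 1) ^ d"

definition grid :: "nat list list" where "grid = List.n_lists d [0..<N + 1]"

(* The min only matters for j \<ge> K, where grid ! j is unspecified: it keeps every node in the box. *)
definition node_coord :: "nat \<Rightarrow> nat \<Rightarrow> real" where
  "node_coord j i = p ! i + real (min (grid ! j ! i) N) / real N * (q ! i - p ! i)"

definition node :: "nat \<Rightarrow> real list" where "node j = map (node_coord j) [0..<d]"

definition cone :: "nat \<Rightarrow> real list \<Rightarrow> real" where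
  "cone j x = f (node j) - L * (\<Sum>i<d. \<bar>x ! i - node_coord j i\<bar>)"

definition cone_max :: "nat \<Rightarrow> real list \<Rightarrow> real" where
  "cone_max j x = Max ((\<lambda>t. cone t x) ` {..j})"

(* Layer 1: neuron j * (2 * d) + 2 * i + s is the positive (s = 0) or negative (s = 1) part
   of x ! i - node_coord j i. Layer k \<ge> 2: neurons 0 and 1 are the two parts of cone_max (k - 2),
   neuron 2 is the positive part of cone (k - 1) - cone_max (k - 2), and neurons 3, 4, ... are
   the two parts of the cones k, k + 1, ... still to be merged. *)
definition act :: "nat \<Rightarrow> real list \<Rightarrow> nat \<Rightarrow> real" where
  "act k x n =
    (if k = 1 then max ((if even n then 1 else -1)
                       * (x ! (n mod (2 * d) div 2) - node_coord (n div (2 * d)) (n mod (2 * d) div 2))) 0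
     else if n = 0 then max (cone_max (k - 2) x) 0
     else if n = 1 then max (- cone_max (k - 2) x) 0
     else if n = 2 then max (cone (k - 1) x - cone_max (k - 2) x) 0
     else max ((if even n then -1 else 1) * cone (k + (n - 3) div 2) x) 0)"

definition weight_in :: "nat \<Rightarrow> nat \<Rightarrow> real" where
  "weight_in n c = (if c = n mod (2 * d) div 2 then (if even n then 1 else -1) else 0)"

definition weight_cones :: "nat \<Rightarrow> nat \<Rightarrow> real" where
  "weight_cones n c =
    (if n = 0 then (if c div (2 * d) = 0 then -L else 0)
     else if n = 1 then (if c div (2 * d) = 0 then L else 0)
     else if n = 2 then (if c div (2 * d) = 1 then -L else if c div (2 * d) = 0 then L else 0)
     else if c div (2 * d) = (n - 3) div 2 + 2 then (if even n then L else -L) else 0)"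

definition weight_merge :: "nat \<Rightarrow> nat \<Rightarrow> real" where
  "weight_merge n c =
    (if n = 0 then (if c = 0 then 1 else if c = 1 then -1 else if c = 2 then 1 else 0)
     else if n = 1 then (if c = 0 then -1 else if c = 1 then 1 else if c = 2 then -1 else 0)
     else if n = 2 then (if c = 0 then -1 else if c = 1 then 1 else if c = 2 then -1
                         else if c = 3 then 1 else if c = 4 then -1 else 0)
     else if c = n + 2 then 1 else 0)"

definition weight :: "nat \<Rightarrow> nat \<Rightarrow> nat \<Rightarrow> real" where
  "weight k = (if k = 0 then weight_in else if k = 1 then weight_cones else weight_merge)"

definition bias :: "nat \<Rightarrow> nat \<Rightarrow> real" where
  "bias k n =
    (if k = 0 then (if even n then -1 else 1) * node_coord (n div (2 * d)) (n mod (2 * d) div 2)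
     else if k = 1 then
       (if n = 0 then f (node 0) else if n = 1 then - f (node 0)
        else if n = 2 then f (node 1) - f (node 0)
        else (if even n then -1 else 1) * f (node ((n - 3) div 2 + 2)))
     else 0)"

definition width :: "nat \<Rightarrow> nat" where
  "width m = (if m = 0 then d else if m = 1 then 2 * d * K else if m \<le> K then 2 * K - 2 * m + 3 else 1)"

definition widths :: "nat list" where "widths = map width [0..<K + 2]"

definition params :: "nat \<Rightarrow> real list" where
  "params dd = net_params weight bias widths (K + 1) @ replicate (dd - offs widths (K + 1)) 0"

lemma K_ge_2: "K \<ge> 2"
proof -
  have "(2::nat) ^ 1 \<le> 2 ^ d" using d_pos by (intro power_increasing) auto
  also have "\<dots> \<le> (N + 1) ^ d" using N_pos by (intro power_mono) auto
  finally show ?thesis by (simp add: K_def)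
qed

lemma cone_max_0: "cone_max 0 x = cone 0 x"
  by (simp add: cone_max_def)

lemma cone_max_Suc: "cone_max (Suc j) x = max (cone_max j x) (cone (Suc j) x)"
proof -
  have "{..Suc j} = insert (Suc j) {..j}" by auto
  then show ?thesis unfolding cone_max_def by (simp add: max.commute)
qed

lemma width_simps:
  "width 0 = d" "width 1 = 2 * d * K" "width 2 = 2 * K - 1"
  "2 \<le> m \<Longrightarrow> m \<le> K \<Longrightarrow> width m = 2 * K - 2 * m + 3" "width (K + 1) = 1"
  using K_ge_2 by (auto simp: width_def)

lemma act_merged:
  assumes "k \<noteq> 1"
  shows "act k x 0 = max (cone_max (k - 2) x) 0" "act k x 1 = max (- cone_max (k - 2) x) 0"
    "act k x 2 = max (cone (k - 1) x - cone_max (k - 2) x) 0"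
    "n \<ge> 3 \<Longrightarrow> act k x n = max ((if even n then -1 else 1) * cone (k + (n - 3) div 2) x) 0"
  using assms by (simp_all add: act_def)

lemma first_layer_coord_less: "n mod (2 * d) div 2 < d"
proof -
  have "n mod (2 * d) < 2 * d" using d_pos by simp
  then show ?thesis by linarith
qed

lemma act_first_layer:
  "max ((\<Sum>c<d. weight 0 n c * x ! c) + bias 0 n) 0 = act 1 x n"
proof -
  have "(\<Sum>c<d. weight 0 n c * x ! c) = (if even n then 1 else -1) * x ! (n mod (2 * d) div 2)"
    using first_layer_coord_less
    by (simp add: weight_def weight_in_def if_distrib[of "\<lambda>z. z * _"] sum.delta cong: if_cong)
  then show ?thesis by (simp add: act_def bias_def algebra_simps)
qed

lemma act_first_layer_index:
  assumes "i < d" and "s < 2"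
  shows "act 1 x (j * (2 * d) + i * 2 + s) = max ((if s = 0 then 1 else -1) * (x ! i - node_coord j i)) 0"
proof -
  have lt: "i * 2 + s < 2 * d" using assms by linarith
  have eq: "j * (2 * d) + i * 2 + s = (i * 2 + s) + j * (2 * d)" by simp
  have "(j * (2 * d) + i * 2 + s) mod (2 * d) = i * 2 + s"
    unfolding eq mod_mult_self1 using lt by simp
  moreover have "(j * (2 * d) + i * 2 + s) div (2 * d) = j"
    unfolding eq using lt by simp
  moreover have "even (j * (2 * d) + i * 2 + s) \<longleftrightarrow> s = 0" using assms(2) by auto
  moreover have "(i * 2 + s) div 2 = i" using assms(2) by auto
  ultimately show ?thesis by (simp add: act_def)
qed

lemma sum_act_first_layer_block:
  assumes "j < K"
  shows "(\<Sum>c<2 * d * K. if c div (2 * d) = j then act 1 x c else 0) = (\<Sum>i<d. \<bar>x ! i - node_coord j i\<bar>)"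
proof -
  let ?g = "\<lambda>c. if c div (2 * d) = j then act 1 x c else 0"
  have block: "c div (2 * d) = m" if "c \<in> {m * (2 * d)..<m * (2 * d) + 2 * d}" for c m
    using that by (intro div_nat_eqI) (auto simp: mult.commute)
  have "(\<Sum>c<2 * d * K. ?g c) = (\<Sum>m<K. \<Sum>c\<in>{m * (2 * d)..<m * (2 * d) + 2 * d}. ?g c)"
    using sum.nat_group[of ?g "2 * d" K] by (simp add: mult.commute)
  also have "\<dots> = (\<Sum>m<K. if m = j then (\<Sum>c\<in>{m * (2 * d)..<m * (2 * d) + 2 * d}. act 1 x c) else 0)"
    using block by (intro sum.cong) auto
  also have "\<dots> = (\<Sum>c\<in>{j * (2 * d)..<j * (2 * d) + 2 * d}. act 1 x c)"
    using assms by simp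
  also have "\<dots> = (\<Sum>t<d * 2. act 1 x (j * (2 * d) + t))"
    using sum.shift_bounds_nat_ivl[of "act 1 x" 0 "j * (2 * d)" "2 * d"]
    by (simp add: atLeast0LessThan add.commute mult.commute)
  also have "\<dots> = (\<Sum>i<d. \<Sum>t\<in>{i * 2..<i * 2 + 2}. act 1 x (j * (2 * d) + t))"
    using sum.nat_group[of "\<lambda>t. act 1 x (j * (2 * d) + t)" 2 d] by simp
  also have "\<dots> = (\<Sum>i<d. \<bar>x ! i - node_coord j i\<bar>)"
  proof (rule sum.cong[OF refl])
    fix i assume "i \<in> {..<d}"
    have "{i * 2..<i * 2 + 2} = {i * 2, i * 2 + 1}" by auto
    then show "(\<Sum>t\<in>{i * 2..<i * 2 + 2}. act 1 x (j * (2 * d) + t)) = \<bar>x ! i - node_coord j i\<bar>"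
      using act_first_layer_index[of i 0 x j] act_first_layer_index[of i 1 x j] \<open>i \<in> {..<d}\<close>
      by (simp add: add.assoc)
  qed
  finally show ?thesis .
qed

lemma cone_eq_first_layer:
  "j < K \<Longrightarrow> cone j x = f (node j) - L * (\<Sum>c<2 * d * K. if c div (2 * d) = j then act 1 x c else 0)"
  using sum_act_first_layer_block by (simp add: cone_def)

lemma act_second_layer:
  assumes "n < width 2"
  shows "max ((\<Sum>c<width 1. weight 1 n c * act 1 x c) + bias 1 n) 0 = act 2 x n"
proof -
  let ?S = "\<lambda>j. \<Sum>c<2 * d * K. if c div (2 * d) = j then act 1 x c else 0"
  have cone: "cone j x = f (node j) - L * ?S j" if "j < K" for j
    using that by (rule cone_eq_first_layer)
  consider "n = 0" | "n = 1" | "n = 2" | "n \<ge> 3" by linarith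
  then show ?thesis
  proof cases
    case 1
    have "(\<Sum>c<width 1. weight 1 n c * act 1 x c) = - L * ?S 0"
      unfolding width_simps sum_distrib_left
      using 1 by (intro sum.cong) (simp_all add: weight_def weight_cones_def)
    then show ?thesis using 1 cone[of 0] K_ge_2 by (simp add: act_def bias_def cone_max_0)
  next
    case 2
    have "(\<Sum>c<width 1. weight 1 n c * act 1 x c) = L * ?S 0"
      unfolding width_simps sum_distrib_left
      using 2 by (intro sum.cong) (simp_all add: weight_def weight_cones_def)
    then show ?thesis using 2 cone[of 0] K_ge_2 by (simp add: act_def bias_def cone_max_0)
  next
    case 3
    have "(\<Sum>c<width 1. weight 1 n c * act 1 x c) = - L * ?S 1 + L * ?S 0"
      unfolding width_simps sum_distrib_left sum.distrib[symmetric]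
      using 3 by (intro sum.cong) (simp_all add: weight_def weight_cones_def)
    then show ?thesis using 3 cone[of 0] cone[of 1] K_ge_2 by (simp add: act_def bias_def cone_max_0)
  next
    case 4
    define j where "j = (n - 3) div 2 + 2"
    have "j < K" using assms 4 K_ge_2 unfolding j_def width_simps by linarith
    define \<sigma> :: real where "\<sigma> = (if even n then -1 else 1)"
    have "(\<Sum>c<width 1. weight 1 n c * act 1 x c) = - \<sigma> * L * ?S j"
      unfolding width_simps sum_distrib_left
      using 4 by (intro sum.cong) (simp_all add: weight_def weight_cones_def j_def \<sigma>_def)
    then have "(\<Sum>c<width 1. weight 1 n c * act 1 x c) + bias 1 n = \<sigma> * cone j x"
      using 4 cone[OF \<open>j < K\<close>] by (simp add: bias_def j_def \<sigma>_def algebra_simps)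
    moreover have "j = 2 + (n - 3) div 2" by (simp add: j_def)
    ultimately show ?thesis using 4 by (simp add: act_def \<sigma>_def)
  qed
qed

lemma merge_row_0: "3 \<le> n \<Longrightarrow> (\<Sum>c<n. weight_merge 0 c * h c) = h 0 - h 1 + h 2"
  by (subst sum_lessThan_truncate[of 3]) (auto simp: weight_merge_def numeral_eq_Suc)

lemma merge_cone_max:
  assumes "2 \<le> k"
  shows "act k x 0 - act k x 1 + act k x 2 = cone_max (k - 1) x"
proof -
  have "cone_max (k - 1) x = max (cone_max (k - 2) x) (cone (k - 1) x)"
    using cone_max_Suc[of "k - 2" x] assms by (simp add: Suc_diff_Suc numeral_2_eq_2)
  moreover have "k \<noteq> 1" using assms by simp
  ultimately show ?thesis unfolding act_merged(1-3)[OF \<open>k \<noteq> 1\<close>] max_eq_relu_combination by simp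
qed

lemma act_next_layer:
  assumes "2 \<le> k" and "k < K" and "n < width (k + 1)"
  shows "max ((\<Sum>c<width k. weight k n c * act k x c) + bias k n) 0 = act (k + 1) x n"
proof -
  let ?h = "act k x"
  have widths: "width k = width (k + 1) + 2" "width (k + 1) \<ge> 3"
    using assms width_simps(4)[of k] width_simps(4)[of "k + 1"] by auto
  have weight: "weight k = weight_merge" and bias: "bias k n = 0"
    using assms by (simp_all add: weight_def bias_def)
  have k1: "k \<noteq> 1" "k + 1 \<noteq> 1" using assms by auto
  have merged: "?h 0 - ?h 1 + ?h 2 = cone_max (k - 1) x"
    using merge_cone_max assms(1) .
  consider "n = 0" | "n = 1" | "n = 2" | "n \<ge> 3" by linarith
  then show ?thesis
  proof cases
    case 1
    have "3 \<le> width k" using widths by simp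
    then have "(\<Sum>c<width k. weight k n c * ?h c) = cone_max (k - 1) x"
      using 1 merge_row_0 merged by (simp add: weight)
    then show ?thesis using 1 bias act_merged(1)[OF k1(2)] by simp
  next
    case 2
    have "(\<Sum>c<width k. weight k n c * ?h c) = (\<Sum>c<3. weight k n c * ?h c)"
      using 2 weight widths by (intro sum_lessThan_truncate) (auto simp: weight_merge_def)
    also have "\<dots> = - cone_max (k - 1) x"
      using 2 weight merged by (simp add: numeral_eq_Suc weight_merge_def)
    finally show ?thesis using 2 bias act_merged(2)[OF k1(2)] by simp
  next
    case 3
    have "(\<Sum>c<width k. weight k n c * ?h c) = (\<Sum>c<5. weight k n c * ?h c)"
      using 3 weight widths by (intro sum_lessThan_truncate) (auto simp: weight_merge_def)
    also have "\<dots> = - (?h 0 - ?h 1 + ?h 2) + (?h 3 - ?h 4)"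
      using 3 weight by (simp add: numeral_eq_Suc weight_merge_def)
    also have "\<dots> = cone k x - cone_max (k - 1) x"
      using merged act_merged(4)[OF k1(1), of 3 x] act_merged(4)[OF k1(1), of 4 x] by (simp add: max_def)
    finally show ?thesis using 3 bias act_merged(3)[OF k1(2)] by simp
  next
    case 4
    have "(\<Sum>c<width k. weight k n c * ?h c) = (\<Sum>c<width k. if c = n + 2 then ?h c else 0)"
      using 4 weight by (intro sum.cong) (auto simp: weight_merge_def)
    also have "\<dots> = ?h (n + 2)" using assms widths by simp
    also have "\<dots> = act (k + 1) x n"
    proof -
      have "k + (n + 2 - 3) div 2 = k + 1 + (n - 3) div 2" using 4 by presburger
      then show ?thesis using 4 act_merged(4)[OF k1(1), of "n + 2" x] act_merged(4)[OF k1(2), of n x] by simp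
    qed
    finally show ?thesis using 4 bias act_merged(4)[OF k1(2), of n x] by simp
  qed
qed

lemma output_layer: "(\<Sum>c<width K. weight K 0 c * act K x c) + bias K 0 = cone_max (K - 1) x"
proof -
  have "width K = 3" using width_simps(4)[of K] K_ge_2 by simp
  moreover have "weight K = weight_merge" "bias K 0 = 0" using K_ge_2 by (simp_all add: weight_def bias_def)
  ultimately show ?thesis using merge_row_0[of 3] merge_cone_max[of K x] K_ge_2 by simp
qed

lemma length_widths: "length widths = K + 2"
  by (simp add: widths_def)

lemma nth_widths: "m < K + 2 \<Longrightarrow> widths ! m = width m"
  by (simp add: widths_def del: upt_Suc)

lemma affine_params:
  "k \<le> K \<Longrightarrow> affine (params dd) (offs widths k) (width (k + 1)) (width k) z
    = map (\<lambda>i. (\<Sum>j<width k. weight k i j * z ! j) + bias k i) [0..<width (k + 1)]"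
  using affine_net_params[of k "K + 1" weight bias widths] by (simp add: params_def nth_widths)

lemma hidden_params: "1 \<le> k \<Longrightarrow> k \<le> K \<Longrightarrow> hidden (params dd) widths k x = map (act k x) [0..<width k]"
proof (induction k)
  case 0
  then show ?case by simp
next
  case (Suc k)
  show ?case
  proof (cases "k = 0")
    case True
    then have "hidden (params dd) widths (Suc k) x
        = map (\<lambda>i. max ((\<Sum>j<d. weight 0 i j * x ! j) + bias 0 i) 0) [0..<width 1]"
      using affine_params[of 0] K_ge_2 by (simp add: nth_widths relu_def width_simps)
    then show ?thesis using True by (simp add: act_first_layer)
  next
    case False
    then have "hidden (params dd) widths (Suc k) x
        = map (\<lambda>i. max ((\<Sum>j<width k. weight k i j * act k x j) + bias k i) 0) [0..<width (k + 1)]"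
      using Suc affine_params[of k] by (simp add: nth_widths relu_def)
    also have "\<dots> = map (act (k + 1) x) [0..<width (k + 1)]"
    proof (cases "k = 1")
      case True
      then show ?thesis using act_second_layer by (intro map_cong) (auto simp: numeral_2_eq_2)
    next
      case False
      then show ?thesis using Suc \<open>k \<noteq> 0\<close> act_next_layer[of k] by (intro map_cong) auto
    qed
    finally show ?thesis by simp
  qed
qed

lemma realization_params: "realization (params dd) widths u v x = clip u v [cone_max (K - 1) x]"
proof -
  have "width (Suc K) = 1" using width_simps(5) by simp
  then show ?thesis
    using hidden_params[of K dd x] affine_params[of K dd] output_layer[of x] K_ge_2
    by (simp add: realization_def length_widths nth_widths)
qed

lemma offs_widths: "k \<le> K + 1 \<Longrightarrow> offs widths k = (\<Sum>j\<in>{1..k}. width j * (width (j - 1) + 1))"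
  unfolding offs_def by (intro sum.cong) (auto simp: nth_widths)

lemma length_params: "offs widths (K + 1) \<le> dd \<Longrightarrow> length (params dd) = dd"
  by (simp add: params_def length_net_params)

lemma widths_shape:
  "length widths \<ge> 2" "\<forall>k<length widths. widths ! k \<ge> 1" "widths ! 0 = d" "widths ! (length widths - 1) = 1"
  using d_pos K_ge_2 by (auto simp: length_widths nth_widths width_def)

lemma sum_merge_layer_sizes:
  "(\<Sum>k\<in>{3..K}. real (width k * (width (k - 1) + 1))) = (\<Sum>k\<in>{3..K}. (2 * real k - 3) * (2 * real k))"
proof -
  have "(\<Sum>k\<in>{3..K}. real (width k * (width (k - 1) + 1)))
      = (\<Sum>k\<in>{3..K}. real (width (K + 3 - k) * (width (K + 3 - k - 1) + 1)))"
    by (rule sum.atLeastAtMost_rev)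
  also have "\<dots> = (\<Sum>k\<in>{3..K}. (2 * real k - 3) * (2 * real k))"
  proof (rule sum.cong[OF refl])
    fix k assume "k \<in> {3..K}"
    then have "width (K + 3 - k) = 2 * k - 3" "width (K + 3 - k - 1) = 2 * k - 1"
      by (simp_all add: width_def, arith+)
    then show "real (width (K + 3 - k) * (width (K + 3 - k - 1) + 1)) = (2 * real k - 3) * (2 * real k)"
      using \<open>k \<in> {3..K}\<close> by simp
  qed
  finally show ?thesis .
qed

lemma offs_widths_bound:
  "real (offs widths (K + 1))
    \<le> 2 * real d ^ 2 * (real N + 1) ^ d + 5 * real d * (real N + 1) ^ (2 * d) + 4 / 3 * (real N + 1) ^ (3 * d)"
proof -
  let ?F = "\<lambda>k. real (width k * (width (k - 1) + 1))"
  have K: "real K = (real N + 1) ^ d" by (simp add: K_def add.commute)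
  have "{1..K + 1} = {1, 2} \<union> {3..K} \<union> {K + 1}" using K_ge_2 by auto
  then have "real (offs widths (K + 1)) = ?F 1 + ?F 2 + (\<Sum>k\<in>{3..K}. ?F k) + ?F (K + 1)"
    using K_ge_2 by (simp add: offs_widths sum.union_disjoint)
  also have "\<dots> = 2 * real d ^ 2 * real K + 4 * real d * real K ^ 2 + 2 * real K + 3
      + (\<Sum>k\<in>{3..K}. (2 * real k - 3) * (2 * real k))"
  proof -
    have w1: "width (Suc 0) = 2 * d * K" by (simp add: width_def)
    then have "?F 1 = 2 * real d * real K * (real d + 1)" by (simp add: width_simps algebra_simps)
    moreover have "?F 2 = (2 * real K - 1) * (2 * real d * real K + 1)"
    proof -
      have "real (width 2) = 2 * real K - 1" using K_ge_2 by (simp add: width_simps of_nat_diff)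
      moreover have "?F 2 = real (width 2) * (real (width (Suc 0)) + 1)" by (simp add: algebra_simps)
      ultimately show ?thesis unfolding w1 by simp
    qed
    moreover have "?F (K + 1) = 4" using K_ge_2 by (simp add: width_def)
    ultimately show ?thesis
      unfolding sum_merge_layer_sizes by (simp add: algebra_simps power2_eq_square)
  qed
  also have "\<dots> \<le> 2 * real d ^ 2 * real K + 5 * real d * real K ^ 2 + 4 / 3 * real K ^ 3"
  proof -
    have "real d * real K ^ 2 \<ge> 1 * real K ^ 2" using d_pos by (intro mult_right_mono) auto
    moreover have "real K ^ 2 \<ge> 2 * real K" using K_ge_2 by (simp add: power2_eq_square)
    ultimately show ?thesis using sum_products_le_cubic[of K] K_ge_2 by linarith
  qed
  finally show ?thesis unfolding K by (simp add: mult.commute[of _ d] power_mult)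
qed

lemma weight_cases: "weight k n c \<in> {0, 1, -1, L, -L}"
proof -
  have "weight_in n c \<in> {0, 1, -1, L, -L}" by (simp add: weight_in_def)
  moreover have "weight_cones n c \<in> {0, 1, -1, L, -L}" by (simp add: weight_cones_def)
  moreover have "weight_merge n c \<in> {0, 1, -1, L, -L}" by (simp add: weight_merge_def)
  ultimately show ?thesis by (simp add: weight_def)
qed

lemma bias_cases:
  "bias k n = 0 \<or> \<bar>bias k n\<bar> = \<bar>node_coord (n div (2 * d)) (n mod (2 * d) div 2)\<bar>
    \<or> (\<exists>j. \<bar>bias k n\<bar> = \<bar>f (node j)\<bar>) \<or> bias k n = f (node 1) - f (node 0)"
  unfolding bias_def by (auto simp: abs_mult)

end

section \<open>Approximation of Lipschitz functions on a box\<close>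

locale lipschitz_grid_net = grid_net +
  fixes D :: "real list set"
  assumes L_nonneg: "0 \<le> L"
    and length_p: "length p = d" and length_q: "length q = d"
    and p_le_q: "\<forall>i<d. p ! i \<le> q ! i"
    and D_eq: "D = {x. length x = d \<and> (\<forall>i<d. p ! i \<le> x ! i \<and> x ! i \<le> q ! i)}"
    and lipschitz: "\<forall>x\<in>D. \<forall>y\<in>D. \<bar>f x - f y\<bar> \<le> L * eucl_dist x y"
begin

lemma node_coord_bounds:
  assumes "i < d"
  shows "p ! i \<le> node_coord j i" and "node_coord j i \<le> q ! i"
proof -
  define r where "r = real (min (grid ! j ! i) N) / real N"
  have "0 \<le> r" "r \<le> 1" using N_pos by (simp_all add: r_def divide_le_eq_1)
  moreover have "0 \<le> q ! i - p ! i" using p_le_q assms by simp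
  ultimately have "0 \<le> r * (q ! i - p ! i)" "r * (q ! i - p ! i) \<le> q ! i - p ! i"
    using mult_right_mono[of r 1 "q ! i - p ! i"] by simp_all
  then show "p ! i \<le> node_coord j i" "node_coord j i \<le> q ! i"
    unfolding node_coord_def r_def[symmetric] by simp_all
qed

lemma node_in_box: "node j \<in> D"
  using node_coord_bounds by (simp add: D_eq node_def)

lemma p_in_box: "p \<in> D"
  using length_p p_le_q by (simp add: D_eq)

lemma f_diff_le_l1:
  assumes "x \<in> D" and "z \<in> D"
  shows "f x - f z \<le> L * (\<Sum>i<d. \<bar>x ! i - z ! i\<bar>)"
proof -
  have "\<bar>f x - f z\<bar> \<le> L * eucl_dist x z" using lipschitz assms by blast
  also have "\<dots> \<le> L * (\<Sum>i<d. \<bar>x ! i - z ! i\<bar>)"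
    using L_nonneg eucl_dist_le_sum_abs[of x d z] assms(1) by (intro mult_left_mono) (auto simp: D_eq)
  finally show ?thesis by linarith
qed

lemma cone_le_f:
  assumes "x \<in> D"
  shows "cone j x \<le> f x"
proof -
  have "f (node j) - f x \<le> L * (\<Sum>i<d. \<bar>node j ! i - x ! i\<bar>)"
    using f_diff_le_l1 node_in_box assms .
  also have "(\<Sum>i<d. \<bar>node j ! i - x ! i\<bar>) = (\<Sum>i<d. \<bar>x ! i - node_coord j i\<bar>)"
    by (intro sum.cong) (auto simp: node_def abs_minus_commute)
  finally show ?thesis by (simp add: cone_def)
qed

lemma exists_near_node:
  assumes "x \<in> D"
  shows "\<exists>j<K. (\<Sum>i<d. \<bar>x ! i - node_coord j i\<bar>) \<le> (\<Sum>i<d. q ! i - p ! i) / (2 * real N)"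
proof -
  define close where "close i k \<longleftrightarrow>
    k \<le> N \<and> \<bar>x ! i - (p ! i + real k / real N * (q ! i - p ! i))\<bar> \<le> (q ! i - p ! i) / (2 * real N)" for i k
  define k where "k i = (SOME k. close i k)" for i
  have k: "close i (k i)" if "i < d" for i
  proof -
    have "p ! i \<le> x ! i" "x ! i \<le> q ! i" using assms that by (auto simp: D_eq)
    from nearest_grid_point[OF this N_pos] have "\<exists>k. close i k" by (auto simp: close_def)
    then show ?thesis unfolding k_def by (rule someI_ex)
  qed
  have "\<forall>i<d. k i \<le> N" using k by (simp add: close_def)
  then have "set (map k [0..<d]) \<subseteq> set [0..<N + 1]" by auto
  then have "map k [0..<d] \<in> set grid" by (simp add: grid_def set_n_lists)
  then obtain j where j: "j < length grid" "grid ! j = map k [0..<d]"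
    by (meson in_set_conv_nth)
  have "\<bar>x ! i - node_coord j i\<bar> \<le> (q ! i - p ! i) / (2 * real N)" if "i < d" for i
    using k[OF that] that by (simp add: close_def node_coord_def j(2))
  then have "(\<Sum>i<d. \<bar>x ! i - node_coord j i\<bar>) \<le> (\<Sum>i<d. (q ! i - p ! i) / (2 * real N))"
    by (intro sum_mono) simp
  also have "\<dots> = (\<Sum>i<d. q ! i - p ! i) / (2 * real N)"
    by (rule sum_divide_distrib[symmetric])
  finally have "(\<Sum>i<d. \<bar>x ! i - node_coord j i\<bar>) \<le> (\<Sum>i<d. q ! i - p ! i) / (2 * real N)" .
  moreover have "j < K" using j(1) by (simp add: grid_def K_def length_n_lists)
  ultimately show ?thesis by blast
qed

lemma cone_max_approx:
  assumes "x \<in> D"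
  shows "\<bar>f x - cone_max (K - 1) x\<bar> \<le> L / real N * (\<Sum>i<d. \<bar>q ! i - p ! i\<bar>)"
proof -
  have max_le: "cone_max (K - 1) x \<le> f x"
    unfolding cone_max_def using cone_le_f[OF assms] by (intro Max.boundedI) auto
  obtain j where j: "j < K" "(\<Sum>i<d. \<bar>x ! i - node_coord j i\<bar>) \<le> (\<Sum>i<d. q ! i - p ! i) / (2 * real N)"
    using exists_near_node[OF assms] by blast
  have "f x - cone j x = f x - f (node j) + L * (\<Sum>i<d. \<bar>x ! i - node_coord j i\<bar>)"
    by (simp add: cone_def)
  also have "\<dots> \<le> 2 * L * (\<Sum>i<d. \<bar>x ! i - node_coord j i\<bar>)"
    using f_diff_le_l1[OF assms node_in_box, of j] by (simp add: node_def)
  also have "\<dots> \<le> 2 * L * ((\<Sum>i<d. q ! i - p ! i) / (2 * real N))"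
    using j(2) L_nonneg by (intro mult_left_mono) auto
  also have "\<dots> = L / real N * (\<Sum>i<d. \<bar>q ! i - p ! i\<bar>)"
  proof -
    have "(\<Sum>i<d. q ! i - p ! i) = (\<Sum>i<d. \<bar>q ! i - p ! i\<bar>)" using p_le_q by (intro sum.cong) auto
    then show ?thesis by simp
  qed
  finally have "f x - cone j x \<le> L / real N * (\<Sum>i<d. \<bar>q ! i - p ! i\<bar>)" .
  moreover have "cone j x \<le> cone_max (K - 1) x"
    unfolding cone_max_def using j(1) by (intro Max_ge) auto
  ultimately show ?thesis using max_le by linarith
qed

lemma realization_error_le:
  assumes "\<forall>x\<in>D. u \<le> ereal (f x) \<and> ereal (f x) \<le> v"
  shows "(SUP x\<in>D. \<bar>f x - hd (realization (params dd) widths u v x)\<bar>) \<le> L / real N * (\<Sum>i<d. \<bar>q ! i - p ! i\<bar>)"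
proof (rule cSUP_least)
  show "D \<noteq> {}" using p_in_box by blast
  fix x assume "x \<in> D"
  then have "\<bar>f x - hd (clip u v [cone_max (K - 1) x])\<bar> \<le> \<bar>f x - cone_max (K - 1) x\<bar>"
    using assms by (intro dist_clip_le) auto
  then show "\<bar>f x - hd (realization (params dd) widths u v x)\<bar> \<le> L / real N * (\<Sum>i<d. \<bar>q ! i - p ! i\<bar>)"
    using cone_max_approx[OF \<open>x \<in> D\<close>] by (simp add: realization_params)
qed

lemma bdd_above_abs_f: "bdd_above ((\<lambda>z. \<bar>f z\<bar>) ` D)"
proof (rule bdd_aboveI2)
  fix z assume "z \<in> D"
  have "f z - f p \<le> L * (\<Sum>i<d. \<bar>z ! i - p ! i\<bar>)" "f p - f z \<le> L * (\<Sum>i<d. \<bar>p ! i - z ! i\<bar>)"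
    using f_diff_le_l1 \<open>z \<in> D\<close> p_in_box by auto
  moreover have "(\<Sum>i<d. \<bar>z ! i - p ! i\<bar>) \<le> (\<Sum>i<d. q ! i - p ! i)"
    using \<open>z \<in> D\<close> by (intro sum_mono) (auto simp: D_eq)
  ultimately show "\<bar>f z\<bar> \<le> \<bar>f p\<bar> + L * (\<Sum>i<d. q ! i - p ! i)"
    using L_nonneg mult_left_mono[of _ _ L] by (fastforce simp: abs_minus_commute)
qed

lemma maxnorm_params_le:
  "maxnorm (params dd) \<le> Max {1, L, maxnorm p, maxnorm q, 2 * (SUP z\<in>D. \<bar>f z\<bar>)}"
proof -
  define S where "S = (SUP z\<in>D. \<bar>f z\<bar>)"
  define B where "B = Max {1, L, maxnorm p, maxnorm q, 2 * S}"
  have B: "1 \<le> B" "L \<le> B" "maxnorm p \<le> B" "maxnorm q \<le> B" "2 * S \<le> B"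
    by (auto simp: B_def)
  have f_node: "\<bar>f (node j)\<bar> \<le> S" for j
    unfolding S_def using bdd_above_abs_f node_in_box by (rule cSUP_upper2) auto
  have node_coord_le: "\<bar>node_coord j i\<bar> \<le> B" if "i < d" for j i
  proof -
    have "\<bar>p ! i\<bar> \<le> maxnorm p" "\<bar>q ! i\<bar> \<le> maxnorm q"
      using abs_nth_le_maxnorm that length_p length_q by auto
    then show ?thesis using node_coord_bounds[OF that, of j] B(3,4) unfolding abs_le_iff by linarith
  qed
  have "maxnorm (params dd) \<le> B"
  proof (rule maxnorm_le)
    show "0 \<le> B" using B(1) by linarith
    fix t assume "t \<in> set (params dd)"
    then have "t = 0 \<or> t \<in> set (net_params weight bias widths (K + 1))"
      by (auto simp: params_def)
    then consider "t = 0" | k i j where "t = weight k i j" | k i where "t = bias k i"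
      using set_net_params by blast
    then show "\<bar>t\<bar> \<le> B"
    proof cases
      case 1
      then show ?thesis using B(1) by simp
    next
      case (2 k i j)
      then show ?thesis using weight_cases[of k i j] B(1,2) L_nonneg by auto
    next
      case (3 k i)
      have "0 \<le> S" using f_node[of 0] by linarith
      from bias_cases[of k i] show ?thesis
      proof (elim disjE exE)
        assume "\<bar>bias k i\<bar> = \<bar>node_coord (i div (2 * d)) (i mod (2 * d) div 2)\<bar>"
        then show ?thesis using 3 node_coord_le[OF first_layer_coord_less] by simp
      next
        fix j assume "\<bar>bias k i\<bar> = \<bar>f (node j)\<bar>"
        then show ?thesis using 3 f_node[of j] B(5) \<open>0 \<le> S\<close> by simp
      next
        assume "bias k i = f (node 1) - f (node 0)"
        then show ?thesis using 3 f_node[of 0] f_node[of 1] B(5) unfolding abs_le_iff by simp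
      qed (use 3 B(1) in simp)
    qed
  qed
  then show ?thesis unfolding B_def S_def .
qed

end

theorem corollary3p9:
  fixes d dd N :: nat and L :: real and u v :: ereal
    and p q :: "real list" and f :: "real list \<Rightarrow> real" and D :: "real list set"
  assumes "d \<ge> 1" and "dd \<ge> 1" and "N \<ge> 1"
    and "u < \<infinity>" and "u < v"
    and "real dd \<ge> 2 * real d ^ 2 * (real N + 1) ^ d + 5 * real d * (real N + 1) ^ (2 * d)
                    + 4 / 3 * (real N + 1) ^ (3 * d)"
    and "length p = d" and "length q = d"
    and "\<forall>i<d. p ! i \<le> q ! i"
    and "(MAX j\<in>{..<d}. q ! j - p ! j) > 0"
    and "D = {x. length x = d \<and> (\<forall>i<d. p ! i \<le> x ! i \<and> x ! i \<le> q ! i)}"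
    and "\<forall>x\<in>D. u \<le> ereal (f x) \<and> ereal (f x) \<le> v"
    and "\<forall>x\<in>D. \<forall>y\<in>D. \<bar>f x - f y\<bar> \<le> L * eucl_dist x y"
  shows "\<exists>\<theta> l. length \<theta> = dd \<and> length l \<ge> 2 \<and> (\<forall>k<length l. l ! k \<ge> 1)
      \<and> l ! 0 = d \<and> l ! (length l - 1) = 1
      \<and> maxnorm \<theta> \<le> Max {1, L, maxnorm p, maxnorm q, 2 * (SUP z\<in>D. \<bar>f z\<bar>)}
      \<and> (\<Sum>k\<in>{1..length l - 1}. l ! k * (l ! (k - 1) + 1)) \<le> dd
      \<and> (SUP x\<in>D. \<bar>f x - hd (realization \<theta> l u v x)\<bar>)
           \<le> L / real N * (\<Sum>i<d. \<bar>q ! i - p ! i\<bar>)"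
proof -
  have "0 \<le> L"
  proof -
    have "(\<lambda>j. q ! j - p ! j) ` {..<d} \<noteq> {}" using assms(1) by (simp add: lessThan_empty_iff)
    then have "(MAX j\<in>{..<d}. q ! j - p ! j) \<in> (\<lambda>j. q ! j - p ! j) ` {..<d}" by (intro Max_in) auto
    then obtain j where "j < d" "0 < q ! j - p ! j" using assms(10) by auto
    then have "0 < eucl_dist q p" using assms(8) by (intro eucl_dist_pos) auto
    moreover have "\<bar>f q - f p\<bar> \<le> L * eucl_dist q p" using assms(7-9,11,13) by auto
    ultimately show ?thesis by (smt (verit) zero_le_mult_iff)
  qed
  interpret lipschitz_grid_net d N L p q f D
    using assms \<open>0 \<le> L\<close> by unfold_locales auto
  have "offs widths (K + 1) \<le> dd" using offs_widths_bound assms(6) by linarith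
  moreover have "(\<Sum>k\<in>{1..length widths - 1}. widths ! k * (widths ! (k - 1) + 1)) = offs widths (K + 1)"
    by (simp add: offs_def length_widths)
  ultimately show ?thesis
    using length_params widths_shape maxnorm_params_le realization_error_le[OF assms(12)]
    by (intro exI[of _ "params dd"] exI[of _ widths]) simp
qed

end
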